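(* Let $\Gamma$ be a maximal consistent set of SBTrust and let $\delta,\psi$ be propositional formulas. Then $\delta\rightsquigarrow\psi\in\Gamma$ if and only if $\psi\in\Delta$ for every $(\Delta,\varphi,i)\in\mathit{max}([\delta]_\Gamma)$.
   Context: $\mathcal{L}_T$: $\alpha::=\varphi\mid\varphi\rightsquigarrow\varphi\mid B(\alpha)\mid\alpha*\alpha\mid\neg\alpha$, with $\varphi$ ranging over classical propositional formulas (set $\mathcal{L}_{CL}$) and $*\in\{\land,\lor,\to,\leftrightarrow\}$. SBTrust is the Hilbert system ($\varphi,\psi,\chi,\varphi_i,\psi_i$ propositional; $\alpha,\beta\in\mathcal{L}_T$; rule outputs in $\mathcal{L}_T$): classical tautologies and Modus Ponens; $\varphi\rightsquigarrow\varphi$; $(\varphi\rightsquigarrow\bot)\to\neg\varphi$; $((\psi\land\chi)\rightsquigarrow\varphi)\to(\psi\rightsquigarrow(\chi\to\varphi))$; $(\neg(\varphi\leftrightarrow\psi)\rightsquigarrow\bot)\to((\varphi\rightsquigarrow\chi)\leftrightarrow(\psi\rightsquigarrow\chi))$; rule RCK: from $(\varphi_1\land\dots\land\varphi_n)\to\varphi_{n+1}$ infer $\bigwedge_{j\le n}(\psi\rightsquigarrow\varphi_j)\to(\psi\rightsquigarrow\varphi_{n+1})$; rule $\mathbf{S5_F}$: from $(\ell_1\land\dots\land\ell_n)\to\chi$ infer $(\ell_1\land\dots\land\ell_n)\to(\neg\chi\rightsquigarrow\bot)$, each $\ell_j$ being $\varphi_j\rightsquigarrow\psi_j$ or its negation,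 $\chi$ propositional; $B(\alpha\to\beta)\to(B\alpha\to B\beta)$; $B\alpha\to\neg B\neg\alpha$; $B\alpha\to BB\alpha$; necessitation for $B$. A maximal consistent set (MCS) is $\Gamma\subseteq\mathcal{L}_T$ with $\Gamma\nvdash\bot$ and, for each $\alpha$, $\alpha\in\Gamma$ or $\neg\alpha\in\Gamma$. For MCSs, $\Gamma\leftrightsquigarrow\Delta$ iff they contain the same formulas of the form $\chi\rightsquigarrow\psi$; $[\Gamma]_\leftrightsquigarrow$ is the equivalence class. $\rightsquigarrow_\varphi(\Gamma)=\{\psi:\varphi\rightsquigarrow\psi\in\Gamma\}$, and $\Delta$ is $\varphi$-likely for $\Gamma$ if $\rightsquigarrow_\varphi(\Gamma)\subseteq\Delta$. Let $S_\Gamma=[\Gamma]_\leftrightsquigarrow\times\mathcal{L}_{CL}\times\{0,1,2\}$ and $[\delta]_\Gamma=\{(\Delta,\varphi,i)\in S_\Gamma:\delta\in\Delta\}$. Define $\succeq_\Gamma\subseteq S_\Gamma\times S_\Gamma$ by: $(\Delta,\varphi,i)\succeq_\Gamma(\Omega,\psi,j)$ iff ($\Delta$ is $\varphi$-likely for $\Gamma$ and $\varphi\in\Omega$) or ($i=1,j=0$) or ($i=2,j=1$) or ($i=0,j=2$). For $X\subseteq S_\Gamma$, $\mathit{max}(X)=\{x\in X:\forall y\in X\,(y\succeq_\Gamma x\Rightarrow x\succeq_\Gamma y)\}$. *)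

theory Defs
  imports Main
begin

text \<open>A single formula type; classical propositional formulas (L_CL) and
  the trust language L_T are carved out by the predicates below, so that a
  propositional formula literally is an L_T formula (as in the paper's grammar).\<close>

datatype form =
    Var nat
  | Bot
  | Not form
  | And form form
  | Or form form
  | Imp form form
  | Iff form form
  | Cond form form   (* phi ~> psi *)
  | Bel form

fun is_prop :: "form \<Rightarrow> bool" where
  "is_prop (Var n) = True"
| "is_prop Bot = True"
| "is_prop (Not a) = is_prop a"
| "is_prop (And a b) = (is_prop a \<and> is_prop b)"
| "is_prop (Or a b) = (is_prop a \<and> is_prop b)"
| "is_prop (Imp a b) = (is_prop a \<and> is_prop b)"
| "is_prop (Iff a b) = (is_prop a \<and> is_prop b)"
| "is_prop (Cond a b) = False"
| "is_prop (Bel a) = False"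

fun in_LT :: "form \<Rightarrow> bool" where
  "in_LT (Var n) = True"
| "in_LT Bot = True"
| "in_LT (Not a) = in_LT a"
| "in_LT (And a b) = (in_LT a \<and> in_LT b)"
| "in_LT (Or a b) = (in_LT a \<and> in_LT b)"
| "in_LT (Imp a b) = (in_LT a \<and> in_LT b)"
| "in_LT (Iff a b) = (in_LT a \<and> in_LT b)"
| "in_LT (Cond a b) = (is_prop a \<and> is_prop b)"
| "in_LT (Bel a) = in_LT a"

definition Top :: form where "Top = Not Bot"

fun conj :: "form list \<Rightarrow> form" where
  "conj [] = Top"
| "conj [a] = a"
| "conj (a # as) = And a (conj as)"

text \<open>Subformulas of the form Var, Cond and Bel are treated as atoms.\<close>

fun teval :: "(form \<Rightarrow> bool) \<Rightarrow> form \<Rightarrow> bool" where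
  "teval v (Var n) = v (Var n)"
| "teval v Bot = False"
| "teval v (Not a) = (\<not> teval v a)"
| "teval v (And a b) = (teval v a \<and> teval v b)"
| "teval v (Or a b) = (teval v a \<or> teval v b)"
| "teval v (Imp a b) = (teval v a \<longrightarrow> teval v b)"
| "teval v (Iff a b) = (teval v a \<longleftrightarrow> teval v b)"
| "teval v (Cond a b) = v (Cond a b)"
| "teval v (Bel a) = v (Bel a)"

definition tautology :: "form \<Rightarrow> bool" where
  "tautology a \<longleftrightarrow> (\<forall>v. teval v a)"

definition is_literal :: "form \<Rightarrow> bool" where
  "is_literal l \<longleftrightarrow> (\<exists>a b. is_prop a \<and> is_prop b \<and> (l = Cond a b \<or> l = Not (Cond a b)))"

inductive sbthm :: "form \<Rightarrow> bool" where
  Taut: "in_LT a \<Longrightarrow> tautology a \<Longrightarrow> sbthm a"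
| MP: "sbthm a \<Longrightarrow> sbthm (Imp a b) \<Longrightarrow> sbthm b"
| Id: "is_prop p \<Longrightarrow> sbthm (Cond p p)"
| BotAx: "is_prop p \<Longrightarrow> sbthm (Imp (Cond p Bot) (Not p))"
| Exp: "is_prop p \<Longrightarrow> is_prop q \<Longrightarrow> is_prop c \<Longrightarrow>
        sbthm (Imp (Cond (And q c) p) (Cond q (Imp c p)))"
| Equiv: "is_prop p \<Longrightarrow> is_prop q \<Longrightarrow> is_prop c \<Longrightarrow>
        sbthm (Imp (Cond (Not (Iff p q)) Bot) (Iff (Cond p c) (Cond q c)))"
| RCK: "ps \<noteq> [] \<Longrightarrow> \<forall>p\<in>set ps. is_prop p \<Longrightarrow> is_prop p' \<Longrightarrow> is_prop q \<Longrightarrow>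
        sbthm (Imp (conj ps) p') \<Longrightarrow>
        sbthm (Imp (conj (map (Cond q) ps)) (Cond q p'))"
| S5F: "ls \<noteq> [] \<Longrightarrow> \<forall>l\<in>set ls. is_literal l \<Longrightarrow> is_prop c \<Longrightarrow>
        sbthm (Imp (conj ls) c) \<Longrightarrow>
        sbthm (Imp (conj ls) (Cond (Not c) Bot))"
| K: "in_LT a \<Longrightarrow> in_LT b \<Longrightarrow> sbthm (Imp (Bel (Imp a b)) (Imp (Bel a) (Bel b)))"
| D: "in_LT a \<Longrightarrow> sbthm (Imp (Bel a) (Not (Bel (Not a))))"
| Four: "in_LT a \<Longrightarrow> sbthm (Imp (Bel a) (Bel (Bel a)))"
| Nec: "sbthm a \<Longrightarrow> sbthm (Bel a)"

text \<open>Derivability from a set of premises: the premises are used only through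
  Modus Ponens (standard for systems with necessitation).\<close>

definition derives :: "form set \<Rightarrow> form \<Rightarrow> bool" where
  "derives G a \<longleftrightarrow> (\<exists>gs. set gs \<subseteq> G \<and> sbthm (Imp (conj gs) a))"

definition MCS :: "form set \<Rightarrow> bool" where
  "MCS G \<longleftrightarrow> G \<subseteq> {a. in_LT a} \<and> \<not> derives G Bot \<and>
     (\<forall>a. in_LT a \<longrightarrow> a \<in> G \<or> Not a \<in> G)"

definition cond_equiv_class :: "form set \<Rightarrow> form set set" where
  "cond_equiv_class G = {D. MCS D \<and> (\<forall>c p. Cond c p \<in> D \<longleftrightarrow> Cond c p \<in> G)}"

definition cond_of :: "form \<Rightarrow> form set \<Rightarrow> form set" where
  "cond_of p G = {q. Cond p q \<in> G}"

definition likely :: "form set \<Rightarrow> form \<Rightarrow> form set \<Rightarrow> bool" where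
  "likely G p D \<longleftrightarrow> cond_of p G \<subseteq> D"

definition S_of :: "form set \<Rightarrow> (form set \<times> form \<times> nat) set" where
  "S_of G = {(D, p, i). D \<in> cond_equiv_class G \<and> is_prop p \<and> i \<in> {0,1,2}}"

definition ext :: "form set \<Rightarrow> form \<Rightarrow> (form set \<times> form \<times> nat) set" where
  "ext G d = {(D, p, i) \<in> S_of G. d \<in> D}"

definition succeq :: "form set \<Rightarrow> form set \<times> form \<times> nat \<Rightarrow> form set \<times> form \<times> nat \<Rightarrow> bool" where
  "succeq G x y = (case x of (D, p, i) \<Rightarrow> case y of (Om, q, j) \<Rightarrow>
      (likely G p D \<and> p \<in> Om) \<or> (i = 1 \<and> j = 0) \<or> (i = 2 \<and> j = 1) \<or> (i = 0 \<and> j = 2))"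

definition maxel :: "form set \<Rightarrow> (form set \<times> form \<times> nat) set \<Rightarrow> (form set \<times> form \<times> nat) set" where
  "maxel G X = {x \<in> X. \<forall>y\<in>X. succeq G y x \<longrightarrow> succeq G x y}"

end

theory Submission
  imports Defs
begin

text \<open>
  The class of \<open>G\<close> behaves like the worlds of an S5 modality: if a propositional \<open>c\<close>
  holds in every member of the class, then S5F (via Lindenbaum) puts \<open>\<not>c \<leadsto> \<bottom>\<close> into
  \<open>G\<close>, and Equiv then lets two antecedents that agree on the class be interchanged.

  For a maximal \<open>(D, p, i)\<close> the cyclic index order forces \<open>D\<close> to be \<open>p\<close>-likely and
  \<open>p\<close> to hold wherever \<open>d\<close> does; so \<open>p \<and> d\<close> and \<open>d\<close> agree on the class, and
  \<open>d \<leadsto> q\<close> yields \<open>p \<and> d \<leadsto> q\<close>, then \<open>p \<leadsto> (d \<rightarrow> q)\<close> by Exp, whence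
  \<open>d \<rightarrow> q \<in> D\<close>. Conversely every \<open>d\<close>-likely member \<open>\<Omega>\<close> containing \<open>d\<close> gives
  the maximal element \<open>(\<Omega>, d, 0)\<close>. If \<open>q\<close> holds in all of these, compactness
  yields finitely many \<open>d \<leadsto> p\<^sub>j\<close> entailing \<open>q\<close> on the class together with \<open>d\<close>;
  replacing \<open>d\<close> by \<open>e = d \<and> (d \<and> \<And>p\<^sub>j \<rightarrow> q)\<close>, which agrees with \<open>d\<close> on the
  class, RCK gives \<open>e \<leadsto> q\<close> and hence \<open>d \<leadsto> q\<close>.
\<close>

lemma is_prop_imp_in_LT: "is_prop a \<Longrightarrow> in_LT a"
  by (induction a) auto

lemma teval_conj [simp]: "teval v (conj as) \<longleftrightarrow> (\<forall>a\<in>set as. teval v a)"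
  by (induction as rule: conj.induct) (auto simp: Top_def)

lemma in_LT_conj [simp]: "in_LT (conj as) \<longleftrightarrow> (\<forall>a\<in>set as. in_LT a)"
  by (induction as rule: conj.induct) (auto simp: Top_def)

lemma is_prop_conj [simp]: "is_prop (conj as) \<longleftrightarrow> (\<forall>a\<in>set as. is_prop a)"
  by (induction as rule: conj.induct) (auto simp: Top_def)

lemma sbthm_imp_in_LT: "sbthm a \<Longrightarrow> in_LT a"
  by (induction rule: sbthm.induct) (auto simp: is_prop_imp_in_LT is_literal_def)

lemma sbthm_tautological_consequence:
  assumes "\<forall>a\<in>set as. sbthm a" and "in_LT b"
    and "\<forall>v. (\<forall>a\<in>set as. teval v a) \<longrightarrow> teval v b"
  shows "sbthm b"
  using assms
proof (induction as arbitrary: b)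
  case Nil
  then show ?case by (intro Taut) (auto simp: tautology_def)
next
  case (Cons a as)
  have "sbthm (Imp a b)"
  proof (rule Cons.IH)
    show "\<forall>a\<in>set as. sbthm a" using Cons.prems(1) by simp
    show "in_LT (Imp a b)" using Cons.prems(1,2) sbthm_imp_in_LT by simp
    show "\<forall>v. (\<forall>a\<in>set as. teval v a) \<longrightarrow> teval v (Imp a b)" using Cons.prems(3) by simp
  qed
  moreover have "sbthm a" using Cons.prems(1) by simp
  ultimately show ?case by (rule MP[rotated])
qed

lemma MCS_in_LT: "MCS G \<Longrightarrow> a \<in> G \<Longrightarrow> in_LT a"
  unfolding MCS_def by auto

lemma MCS_not_refutes: "MCS G \<Longrightarrow> set gs \<subseteq> G \<Longrightarrow> \<not> sbthm (Imp (conj gs) Bot)"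
  unfolding MCS_def derives_def by auto

lemma MCS_Not_iff:
  assumes G: "MCS G" and "in_LT a"
  shows "Not a \<in> G \<longleftrightarrow> a \<notin> G"
proof
  assume "Not a \<in> G"
  moreover have "sbthm (Imp (conj [a, Not a]) Bot)"
    using \<open>in_LT a\<close> by (intro Taut) (auto simp: tautology_def)
  ultimately show "a \<notin> G" using MCS_not_refutes[OF G, of "[a, Not a]"] by auto
qed (use assms in \<open>auto simp: MCS_def\<close>)

lemma MCS_consequence:
  assumes G: "MCS G" and "set gs \<subseteq> G" and "in_LT c"
    and "\<forall>v. (\<forall>g\<in>set gs. teval v g) \<longrightarrow> teval v c"
  shows "c \<in> G"
proof (rule ccontr)
  assume "c \<notin> G"
  then have "set (Not c # gs) \<subseteq> G" using assms MCS_Not_iff by auto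
  moreover have "sbthm (Imp (conj (Not c # gs)) Bot)"
    using assms by (intro Taut) (auto simp: tautology_def MCS_in_LT)
  ultimately show False using MCS_not_refutes[OF G] by blast
qed

lemma MCS_sbthm:
  assumes G: "MCS G" and "sbthm a"
  shows "a \<in> G"
proof (rule ccontr)
  assume "a \<notin> G"
  then have "set [Not a] \<subseteq> G" using G MCS_Not_iff sbthm_imp_in_LT[OF \<open>sbthm a\<close>] by auto
  moreover have "sbthm (Imp (conj [Not a]) Bot)"
    using assms by (intro sbthm_tautological_consequence[of "[a]"]) (auto simp: sbthm_imp_in_LT)
  ultimately show False using MCS_not_refutes[OF G] by blast
qed

lemma MCS_mp: "MCS G \<Longrightarrow> a \<in> G \<Longrightarrow> Imp a b \<in> G \<Longrightarrow> b \<in> G"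
  using MCS_consequence[of G "[a, Imp a b]" b] MCS_in_LT by fastforce

lemma MCS_And_iff:
  assumes G: "MCS G" and "in_LT a" "in_LT b"
  shows "And a b \<in> G \<longleftrightarrow> a \<in> G \<and> b \<in> G"
proof
  assume "And a b \<in> G"
  then show "a \<in> G \<and> b \<in> G"
    using MCS_consequence[OF G, of "[And a b]" a] MCS_consequence[OF G, of "[And a b]" b] assms
    by simp
next
  assume "a \<in> G \<and> b \<in> G"
  then show "And a b \<in> G" using MCS_consequence[OF G, of "[a, b]" "And a b"] assms by simp
qed

lemma MCS_Imp_conj_iff:
  assumes G: "MCS G" and as: "\<forall>a\<in>set as. in_LT a" and b: "in_LT b"
  shows "Imp (conj as) b \<in> G \<longleftrightarrow> (set as \<subseteq> G \<longrightarrow> b \<in> G)"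
proof
  assume "Imp (conj as) b \<in> G"
  then show "set as \<subseteq> G \<longrightarrow> b \<in> G"
    using MCS_consequence[OF G, of "Imp (conj as) b # as" b] b by auto
next
  assume entailed: "set as \<subseteq> G \<longrightarrow> b \<in> G"
  show "Imp (conj as) b \<in> G"
  proof (cases "set as \<subseteq> G")
    case True
    then show ?thesis using entailed MCS_consequence[OF G, of "[b]" "Imp (conj as) b"] as b by simp
  next
    case False
    then obtain a where "a \<in> set as" "a \<notin> G" by blast
    then have "Not a \<in> G" using MCS_Not_iff[OF G] as by blast
    then show ?thesis
      using MCS_consequence[OF G, of "[Not a]" "Imp (conj as) b"] \<open>a \<in> set as\<close> as b by auto
  qed
qed

lemma MCS_Iff_iff:
  assumes G: "MCS G" and "in_LT a" "in_LT b"
  shows "Iff a b \<in> G \<longleftrightarrow> (a \<in> G \<longleftrightarrow> b \<in> G)"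
proof
  assume "Iff a b \<in> G"
  then show "a \<in> G \<longleftrightarrow> b \<in> G"
    using MCS_consequence[OF G, of "[Iff a b, a]" b] MCS_consequence[OF G, of "[Iff a b, b]" a] assms
    by auto
next
  assume "a \<in> G \<longleftrightarrow> b \<in> G"
  then show "Iff a b \<in> G"
    using MCS_consequence[OF G, of "[a, b]" "Iff a b"]
      MCS_consequence[OF G, of "[Not a, Not b]" "Iff a b"] MCS_Not_iff[OF G] assms
    by (cases "a \<in> G") auto
qed

lemma derives_Bot_by_cases:
  assumes "derives (insert a M) Bot" and "derives (insert (Not a) M) Bot"
    and "M \<subseteq> {x. in_LT x}"
  shows "derives M Bot"
proof -
  obtain gs1 where gs1: "set gs1 \<subseteq> insert a M" "sbthm (Imp (conj gs1) Bot)"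
    using assms(1) unfolding derives_def by auto
  obtain gs2 where gs2: "set gs2 \<subseteq> insert (Not a) M" "sbthm (Imp (conj gs2) Bot)"
    using assms(2) unfolding derives_def by auto
  let ?hs = "filter (\<lambda>g. g \<in> M) (gs1 @ gs2)"
  have "sbthm (Imp (conj ?hs) Bot)"
  proof (rule sbthm_tautological_consequence[of "[Imp (conj gs1) Bot, Imp (conj gs2) Bot]"])
    show "\<forall>t\<in>set [Imp (conj gs1) Bot, Imp (conj gs2) Bot]. sbthm t"
      using gs1(2) gs2(2) by simp
    show "in_LT (Imp (conj ?hs) Bot)" using assms(3) by auto
    show "\<forall>v. (\<forall>t\<in>set [Imp (conj gs1) Bot, Imp (conj gs2) Bot]. teval v t) \<longrightarrow>
        teval v (Imp (conj ?hs) Bot)"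
    proof (intro allI impI)
      fix v
      assume refuted: "\<forall>t\<in>set [Imp (conj gs1) Bot, Imp (conj gs2) Bot]. teval v t"
      have "\<not> teval v (conj ?hs)"
      proof
        assume hs: "teval v (conj ?hs)"
        show False
        proof (cases "teval v a")
          case True
          then have "\<forall>g\<in>set gs1. teval v g" using gs1(1) hs by auto
          then show False using refuted by simp
        next
          case False
          then have "\<forall>g\<in>set gs2. teval v g" using gs2(1) hs by auto
          then show False using refuted by simp
        qed
      qed
      then show "teval v (Imp (conj ?hs) Bot)" by simp
    qed
  qed
  moreover have "set ?hs \<subseteq> M" by auto
  ultimately show ?thesis unfolding derives_def by blast
qed

lemma lindenbaum:
  assumes "S \<subseteq> {a. in_LT a}" and "\<not> derives S Bot"
  obtains M where "MCS M" and "S \<subseteq> M"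
proof -
  let ?A = "{M. S \<subseteq> M \<and> M \<subseteq> {a. in_LT a} \<and> \<not> derives M Bot}"
  have "\<exists>M\<in>?A. \<forall>X\<in>?A. M \<subseteq> X \<longrightarrow> X = M"
  proof (rule subset_Zorn_nonempty)
    show "?A \<noteq> {}" using assms by blast
  next
    fix C assume "C \<noteq> {}" and chain: "subset.chain ?A C"
    have "\<not> derives (\<Union>C) Bot"
    proof
      assume "derives (\<Union>C) Bot"
      then obtain gs where gs: "set gs \<subseteq> \<Union>C" "sbthm (Imp (conj gs) Bot)"
        unfolding derives_def by auto
      obtain B where "B \<in> C" "set gs \<subseteq> B"
        using finite_subset_Union_chain[OF _ gs(1) \<open>C \<noteq> {}\<close> chain] by auto
      then show False using gs(2) chain unfolding subset.chain_def derives_def by blast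
    qed
    then show "\<Union>C \<in> ?A" using \<open>C \<noteq> {}\<close> chain unfolding subset.chain_def by blast
  qed
  then obtain M where M: "M \<in> ?A" and max: "\<forall>X\<in>?A. M \<subseteq> X \<longrightarrow> X = M" by blast
  have "a \<in> M \<or> Not a \<in> M" if a: "in_LT a" for a
  proof (rule ccontr)
    assume out: "\<not> (a \<in> M \<or> Not a \<in> M)"
    have "derives (insert b M) Bot" if "b \<in> {a, Not a}" for b
    proof (rule ccontr)
      assume "\<not> derives (insert b M) Bot"
      then have "insert b M \<in> ?A" using M a that by auto
      then show False using max out that by blast
    qed
    then have "derives M Bot" using derives_Bot_by_cases M by blast
    then show False using M by blast
  qed
  with M have "MCS M" unfolding MCS_def by blast
  with M that show thesis by blast
qed

definition cond_literals :: "form set \<Rightarrow> form set" where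
  "cond_literals G = {Cond a b | a b. Cond a b \<in> G} \<union>
     {Not (Cond a b) | a b. is_prop a \<and> is_prop b \<and> Cond a b \<notin> G}"

lemma cond_literals_in_LT: "MCS G \<Longrightarrow> l \<in> cond_literals G \<Longrightarrow> in_LT l"
  unfolding cond_literals_def by (auto dest: MCS_in_LT)

lemma cond_literals_is_literal: "MCS G \<Longrightarrow> l \<in> cond_literals G \<Longrightarrow> is_literal l"
  unfolding cond_literals_def is_literal_def by (auto dest: MCS_in_LT)

lemma cond_equiv_class_iff:
  assumes G: "MCS G"
  shows "D \<in> cond_equiv_class G \<longleftrightarrow> MCS D \<and> cond_literals G \<subseteq> D"
proof
  assume D: "D \<in> cond_equiv_class G"
  then have "MCS D" unfolding cond_equiv_class_def by blast
  moreover have "Not (Cond a b) \<in> D" if "is_prop a" "is_prop b" "Cond a b \<notin> G" for a b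
    using that D MCS_Not_iff[OF \<open>MCS D\<close>, of "Cond a b"] unfolding cond_equiv_class_def by auto
  ultimately show "MCS D \<and> cond_literals G \<subseteq> D"
    using D unfolding cond_equiv_class_def cond_literals_def by blast
next
  assume D: "MCS D \<and> cond_literals G \<subseteq> D"
  have "Cond a b \<in> D \<longleftrightarrow> Cond a b \<in> G" for a b
  proof
    assume "Cond a b \<in> D"
    then have "is_prop a" "is_prop b" "Not (Cond a b) \<notin> D"
      using D MCS_in_LT MCS_Not_iff by fastforce+
    then show "Cond a b \<in> G" using D unfolding cond_literals_def by blast
  qed (use D in \<open>auto simp: cond_literals_def\<close>)
  with D show "D \<in> cond_equiv_class G" unfolding cond_equiv_class_def by blast
qed

lemma Cond_Not_Bot_if_valid_in_class:
  assumes G: "MCS G" and c: "is_prop c" and valid: "\<forall>D\<in>cond_equiv_class G. c \<in> D"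
  shows "Cond (Not c) Bot \<in> G"
proof -
  have "derives (insert (Not c) (cond_literals G)) Bot"
  proof (rule ccontr)
    assume consistent: "\<not> derives (insert (Not c) (cond_literals G)) Bot"
    have "insert (Not c) (cond_literals G) \<subseteq> {a. in_LT a}"
      using c is_prop_imp_in_LT cond_literals_in_LT[OF G] by auto
    then obtain D where D: "MCS D" "insert (Not c) (cond_literals G) \<subseteq> D"
      using consistent by (rule lindenbaum)
    then have "c \<in> D" using valid cond_equiv_class_iff[OF G] by blast
    moreover have "Not c \<in> D" using D by blast
    ultimately show False using MCS_Not_iff[OF D(1)] c is_prop_imp_in_LT by blast
  qed
  then obtain gs where gs: "set gs \<subseteq> insert (Not c) (cond_literals G)" "sbthm (Imp (conj gs) Bot)"
    unfolding derives_def by blast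
  \<comment> \<open>The dummy literal \<open>Cond Top Top\<close> keeps the premise list of S5F nonempty.\<close>
  define ls where "ls = Cond Top Top # filter (\<lambda>l. l \<in> cond_literals G) gs"
  have "Cond Top Top \<in> G" using MCS_sbthm[OF G] Id[of Top] by (simp add: Top_def)
  then have ls: "set ls \<subseteq> cond_literals G" unfolding ls_def cond_literals_def by auto
  have "sbthm (Imp (conj ls) c)"
    using gs ls cond_literals_in_LT[OF G] c is_prop_imp_in_LT
    by (intro sbthm_tautological_consequence[of "[Imp (conj gs) Bot]"]) (auto simp: ls_def Top_def)
  then have "sbthm (Imp (conj ls) (Cond (Not c) Bot))"
    using S5F[of ls c] c ls cond_literals_is_literal[OF G] by (auto simp: ls_def)
  moreover have "cond_literals G \<subseteq> G"
    using cond_equiv_class_iff[OF G, of G] G by (simp add: cond_equiv_class_def)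
  then have "conj ls \<in> G"
    using MCS_consequence[OF G, of ls "conj ls"] ls cond_literals_in_LT[OF G] by auto
  ultimately show ?thesis using MCS_mp[OF G] MCS_sbthm[OF G] by metis
qed

lemma Cond_cong_in_class:
  assumes G: "MCS G" and props: "is_prop a" "is_prop b" "is_prop x"
    and same: "\<forall>D\<in>cond_equiv_class G. a \<in> D \<longleftrightarrow> b \<in> D"
  shows "Cond a x \<in> G \<longleftrightarrow> Cond b x \<in> G"
proof -
  have "\<forall>D\<in>cond_equiv_class G. Iff a b \<in> D"
    using same MCS_Iff_iff props is_prop_imp_in_LT by (auto simp: cond_equiv_class_def)
  then have "Cond (Not (Iff a b)) Bot \<in> G"
    using Cond_Not_Bot_if_valid_in_class[OF G] props by simp
  then have "Iff (Cond a x) (Cond b x) \<in> G"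
    using MCS_mp[OF G _ MCS_sbthm[OF G Equiv[OF props]]] by blast
  then show ?thesis using MCS_Iff_iff[OF G] props by simp
qed

lemma Cond_if_entailed_in_class:
  assumes G: "MCS G" and d: "is_prop d" and q: "is_prop q"
    and ps: "\<forall>p\<in>set ps. Cond d p \<in> G"
    and entailed: "\<forall>D\<in>cond_equiv_class G. d \<in> D \<longrightarrow> set ps \<subseteq> D \<longrightarrow> q \<in> D"
  shows "Cond d q \<in> G"
proof -
  have ps_prop: "\<forall>p\<in>set ps. is_prop p" using ps MCS_in_LT[OF G] by fastforce
  define e where "e = And d (Imp (conj (d # ps)) q)"
  have e: "is_prop e" using d q ps_prop by (simp add: e_def)
  have "e \<in> D \<longleftrightarrow> d \<in> D" if D_class: "D \<in> cond_equiv_class G" for D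
  proof -
    have D: "MCS D" using D_class by (simp add: cond_equiv_class_def)
    have "Imp (conj (d # ps)) q \<in> D"
      using MCS_Imp_conj_iff[OF D, of "d # ps" q] entailed D_class d q ps_prop is_prop_imp_in_LT
      by simp
    then show ?thesis
      using MCS_And_iff[OF D, of d "Imp (conj (d # ps)) q"] d q ps_prop is_prop_imp_in_LT
      by (simp add: e_def)
  qed
  then have cong: "Cond e x \<in> G \<longleftrightarrow> Cond d x \<in> G" if "is_prop x" for x
    using Cond_cong_in_class[OF G e d that] by blast
  have "\<forall>p\<in>set (e # ps). Cond e p \<in> G"
    using MCS_sbthm[OF G Id[OF e]] ps ps_prop cong by auto
  then have "conj (map (Cond e) (e # ps)) \<in> G"
    using MCS_consequence[OF G, of "map (Cond e) (e # ps)" "conj (map (Cond e) (e # ps))"] e ps_prop is_prop_imp_in_LT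
    by auto
  moreover have "sbthm (Imp (conj (e # ps)) q)"
    using d q e ps_prop is_prop_imp_in_LT by (intro Taut) (auto simp: tautology_def e_def)
  then have "sbthm (Imp (conj (map (Cond e) (e # ps))) (Cond e q))"
    using e ps_prop q by (intro RCK) auto
  ultimately have "Cond e q \<in> G" using MCS_mp[OF G] MCS_sbthm[OF G] by metis
  then show ?thesis using cong q by blast
qed

lemma Cond_if_mem_likely_class_members:
  assumes G: "MCS G" and d: "is_prop d" and q: "is_prop q"
    and true: "\<forall>D\<in>cond_equiv_class G. d \<in> D \<longrightarrow> likely G d D \<longrightarrow> q \<in> D"
  shows "Cond d q \<in> G"
proof -
  let ?S = "cond_literals G \<union> {d, Not q} \<union> cond_of d G"
  have cond_of_prop: "is_prop p" if "p \<in> cond_of d G" for p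
    using that MCS_in_LT[OF G] unfolding cond_of_def by fastforce
  have "derives ?S Bot"
  proof (rule ccontr)
    assume consistent: "\<not> derives ?S Bot"
    have "?S \<subseteq> {a. in_LT a}"
      using cond_literals_in_LT[OF G] d q cond_of_prop is_prop_imp_in_LT by auto
    then obtain D where D: "MCS D" "?S \<subseteq> D"
      using consistent by (rule lindenbaum)
    then have "D \<in> cond_equiv_class G" "likely G d D"
      using cond_equiv_class_iff[OF G] unfolding likely_def by auto
    then have "q \<in> D" using true D by blast
    moreover have "Not q \<in> D" using D by blast
    ultimately show False using MCS_Not_iff[OF D(1)] q is_prop_imp_in_LT by blast
  qed
  then obtain gs where gs: "set gs \<subseteq> ?S" "sbthm (Imp (conj gs) Bot)"
    unfolding derives_def by blast
  define ps where "ps = filter (\<lambda>p. p \<in> cond_of d G) gs"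
  show ?thesis
  proof (rule Cond_if_entailed_in_class[OF G d q])
    show "\<forall>p\<in>set ps. Cond d p \<in> G" by (simp add: ps_def cond_of_def)
    show "\<forall>D\<in>cond_equiv_class G. d \<in> D \<longrightarrow> set ps \<subseteq> D \<longrightarrow> q \<in> D"
    proof (intro ballI impI)
      fix D assume D_class: "D \<in> cond_equiv_class G" and "d \<in> D" "set ps \<subseteq> D"
      have D: "MCS D" "cond_literals G \<subseteq> D" using D_class cond_equiv_class_iff[OF G] by blast+
      show "q \<in> D"
      proof (rule ccontr)
        assume "q \<notin> D"
        then have "Not q \<in> D" using MCS_Not_iff[OF D(1)] q is_prop_imp_in_LT by blast
        then have "set gs \<subseteq> D"
          using gs(1) D(2) \<open>d \<in> D\<close> \<open>set ps \<subseteq> D\<close> unfolding ps_def by auto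
        then show False using MCS_not_refutes[OF D(1)] gs(2) by blast
      qed
    qed
  qed
qed

lemma likely_imp_maxel_ext:
  assumes "likely G d D" and "(D, d, i) \<in> ext G d"
  shows "(D, d, i) \<in> maxel G (ext G d)"
  using assms unfolding maxel_def ext_def succeq_def by auto

\<comment> \<open>The third component makes the successor index beat \<open>i\<close> but not conversely, so
  maximality of \<open>(D, p, i)\<close> can only be witnessed through the likelihood clause.\<close>
lemma maxel_ext_imp_likely:
  assumes x: "(D, p, i) \<in> maxel G (ext G d)"
  shows "likely G p D" and "\<forall>\<Omega>\<in>cond_equiv_class G. d \<in> \<Omega> \<longrightarrow> p \<in> \<Omega>"
proof -
  have D: "D \<in> cond_equiv_class G" "d \<in> D" "is_prop p" "i \<in> {0, 1, 2}"
    using x unfolding maxel_def ext_def S_of_def by auto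
  have *: "likely G p D \<and> p \<in> \<Omega>" if "\<Omega> \<in> cond_equiv_class G" "d \<in> \<Omega>" for \<Omega>
  proof -
    let ?y = "(\<Omega>, p, if i = 2 then 0 else Suc i)"
    have "?y \<in> ext G d" using that D unfolding ext_def S_of_def by auto
    moreover have "succeq G ?y (D, p, i)" using D(4) unfolding succeq_def by auto
    ultimately have "succeq G (D, p, i) ?y" using x unfolding maxel_def by blast
    then show ?thesis using D(4) unfolding succeq_def by auto
  qed
  show "likely G p D" using *[OF D(1,2)] by blast
  show "\<forall>\<Omega>\<in>cond_equiv_class G. d \<in> \<Omega> \<longrightarrow> p \<in> \<Omega>" using * by blast
qed

lemma Cond_imp_mem_maxel_ext:
  assumes G: "MCS G" and d: "is_prop d" and q: "is_prop q" and "Cond d q \<in> G"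
    and x: "(D, p, i) \<in> maxel G (ext G d)"
  shows "q \<in> D"
proof -
  have D: "MCS D" "d \<in> D" and p: "is_prop p"
    using x unfolding maxel_def ext_def S_of_def cond_equiv_class_def by auto
  have "\<forall>\<Omega>\<in>cond_equiv_class G. And p d \<in> \<Omega> \<longleftrightarrow> d \<in> \<Omega>"
  proof
    fix \<Omega> assume \<Omega>: "\<Omega> \<in> cond_equiv_class G"
    then have "MCS \<Omega>" by (simp add: cond_equiv_class_def)
    then show "And p d \<in> \<Omega> \<longleftrightarrow> d \<in> \<Omega>"
      using MCS_And_iff[of \<Omega> p d] p d is_prop_imp_in_LT maxel_ext_imp_likely(2)[OF x] \<Omega>
      by auto
  qed
  then have "Cond (And p d) q \<in> G"
    using Cond_cong_in_class[OF G _ d q] p d \<open>Cond d q \<in> G\<close> by simp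
  then have "Cond p (Imp d q) \<in> G" using MCS_mp[OF G _ MCS_sbthm[OF G Exp[OF q p d]]] by blast
  then have "Imp d q \<in> D"
    using maxel_ext_imp_likely(1)[OF x] unfolding likely_def cond_of_def by blast
  then show "q \<in> D" using MCS_mp[OF D(1) D(2)] by blast
qed

theorem corollary2:
  assumes "MCS G" and "is_prop d" and "is_prop q"
  shows "Cond d q \<in> G \<longleftrightarrow> (\<forall>(D, p, i) \<in> maxel G (ext G d). q \<in> D)"
proof
  assume "Cond d q \<in> G"
  then show "\<forall>(D, p, i) \<in> maxel G (ext G d). q \<in> D"
    using Cond_imp_mem_maxel_ext[OF assms] by blast
next
  assume maxel_q: "\<forall>(D, p, i) \<in> maxel G (ext G d). q \<in> D"
  show "Cond d q \<in> G"
  proof (rule Cond_if_mem_likely_class_members[OF assms])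
    show "\<forall>D\<in>cond_equiv_class G. d \<in> D \<longrightarrow> likely G d D \<longrightarrow> q \<in> D"
    proof (intro ballI impI)
      fix D assume "D \<in> cond_equiv_class G" "d \<in> D" "likely G d D"
      then have "(D, d, 0) \<in> maxel G (ext G d)"
        using likely_imp_maxel_ext \<open>is_prop d\<close> unfolding ext_def S_of_def by auto
      then show "q \<in> D" using maxel_q by blast
    qed
  qed
qed

end
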